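(* Let $n\ge 3$, let $\alpha,\beta>0$, and let $S\in\overline{\mathcal{S}}_n$ be an $\alpha/\beta$-staircase tableau that has the symbol $\alpha$ in box $(n-1,1)$. Then \[\mathbb{P}_{n,\alpha,\beta}\big(S \,\big|\, \alpha_{n-1,1}\big)=\mathbb{P}_{n-2,\alpha,\beta}\big(S[1,3]\big),\] where $\alpha_{n-1,1}$ denotes the event that box $(n-1,1)$ contains $\alpha$. In other words, conditioned on $\alpha_{n-1,1}$, the subtableau $S[1,3]$ of a random $S$ with law $\mathbb{P}_{n,\alpha,\beta}$ is a random tableau in $\overline{\mathcal{S}}_{n-2}$ with law $\mathbb{P}_{n-2,\alpha,\beta}$.
   Context: A staircase tableau of size $n$ has boxes $(i,j)$ with $i,j\ge1$ and $i+j\le n+1$ (shape $(n,n-1,\dots,1)$), rows numbered from the top and columns from the left. An $\alpha/\beta$-staircase tableau of size $n$ is a filling in which each box is empty or contains one of the symbols $\alpha$, $\beta$, such that: all boxes in the same column and above a box containing $\alpha$ are empty; all boxes in the same row and to the left of a box containing $\beta$ are empty; every box on the main diagonal (boxes with $i+j=n+1$) contains a symbol. $\overline{\mathcal{S}}_n$ is the set of these. The weight of $S$ is $wt(S)=\alpha^{N_\alpha}\beta^{N_\beta}$, where $N_\alpha,N_\beta$ are the numbers of $\alpha$'s and $\beta$'s in $S$, and for real parameters $\alpha,\beta>0$, $\mathbb{P}_{n,\alpha,\beta}(S)=wt(S)/Z_n(\alpha,\beta)$ with $Z_n(\alpha,\beta)=\sum_{S\in\overline{\mathcal{S}}_n}wt(S)$.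 For $S\in\overline{\mathcal{S}}_n$ and a box $(i,j)$, $S[i,j]\in\overline{\mathcal{S}}_{n-i-j+2}$ denotes the subtableau obtained by deleting the first $i-1$ rows and the first $j-1$ columns. *)

theory Defs
  imports Complex_Main
begin

datatype cell = Emp | Alpha | Beta

(* a filling: rows i and columns j, both numbered from 1; boxes outside the staircase are Emp *)
type_synonym filling = "nat \<Rightarrow> nat \<Rightarrow> cell"

definition boxes :: "nat \<Rightarrow> (nat \<times> nat) set" where
  "boxes n = {(i, j). 1 \<le> i \<and> 1 \<le> j \<and> i + j \<le> n + 1}"

definition staircase :: "nat \<Rightarrow> filling set" where
  "staircase n = {S.
     (\<forall>i j. S i j \<noteq> Emp \<longrightarrow> (i, j) \<in> boxes n) \<and>
     (\<forall>i j. S i j = Alpha \<longrightarrow> (\<forall>i'. 1 \<le> i' \<and> i' < i \<longrightarrow> S i' j = Emp)) \<and>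
     (\<forall>i j. S i j = Beta \<longrightarrow> (\<forall>j'. 1 \<le> j' \<and> j' < j \<longrightarrow> S i j' = Emp)) \<and>
     (\<forall>i j. 1 \<le> i \<and> 1 \<le> j \<and> i + j = n + 1 \<longrightarrow> S i j \<noteq> Emp)}"

definition N_alpha :: "nat \<Rightarrow> filling \<Rightarrow> nat" where
  "N_alpha n S = card {(i, j) \<in> boxes n. S i j = Alpha}"

definition N_beta :: "nat \<Rightarrow> filling \<Rightarrow> nat" where
  "N_beta n S = card {(i, j) \<in> boxes n. S i j = Beta}"

definition wt :: "nat \<Rightarrow> real \<Rightarrow> real \<Rightarrow> filling \<Rightarrow> real" where
  "wt n a b S = a ^ N_alpha n S * b ^ N_beta n S"

definition Z :: "nat \<Rightarrow> real \<Rightarrow> real \<Rightarrow> real" where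
  "Z n a b = (\<Sum>S\<in>staircase n. wt n a b S)"

definition Prob :: "nat \<Rightarrow> real \<Rightarrow> real \<Rightarrow> filling \<Rightarrow> real" where
  "Prob n a b S = wt n a b S / Z n a b"

definition Prob_event :: "nat \<Rightarrow> real \<Rightarrow> real \<Rightarrow> filling set \<Rightarrow> real" where
  "Prob_event n a b E = (\<Sum>S\<in>staircase n \<inter> E. Prob n a b S)"

definition Prob_cond :: "nat \<Rightarrow> real \<Rightarrow> real \<Rightarrow> filling \<Rightarrow> filling set \<Rightarrow> real" where
  "Prob_cond n a b S E =
     (if S \<in> E then Prob n a b S / Prob_event n a b E else 0)"

definition alpha_at :: "nat \<Rightarrow> nat \<Rightarrow> filling set" where
  "alpha_at i j = {S. S i j = Alpha}"

definition subtab :: "filling \<Rightarrow> nat \<Rightarrow> nat \<Rightarrow> filling" where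
  "subtab S i j = (\<lambda>r c. if 1 \<le> r \<and> 1 \<le> c then S (r + i - 1) (c + j - 1) else Emp)"

end

theory Submission
  imports Defs "HOL-Library.FuncSet"
begin

text \<open>An \<open>\<alpha>\<close> in box \<open>(n-1,1)\<close> forces the first two columns: column 1 holds only that \<open>\<alpha>\<close>
  (the boxes above it are emptied) and the diagonal box \<open>(n,1)\<close>, which must be \<open>\<beta>\<close>; the diagonal
  box \<open>(n-1,2)\<close> cannot hold \<open>\<beta>\<close> (its left neighbour is nonempty), so it is an \<open>\<alpha>\<close> that empties
  the rest of column 2. Hence \<open>S \<mapsto> S[1,3]\<close> is a bijection from the conditioning event onto the
  tableaux of size \<open>n-2\<close> that multiplies every weight by the same factor \<open>\<alpha>\<^sup>2\<beta>\<close>, so conditioning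
  gives exactly the law of size \<open>n-2\<close>.\<close>

lemma UNIV_cell: "(UNIV :: cell set) = {Emp, Alpha, Beta}"
  using cell.exhaust by auto

lemma finite_boxes: "finite (boxes n)"
  by (rule finite_subset[of _ "{0..n+1} \<times> {0..n+1}"]) (auto simp: boxes_def)

lemma staircaseD:
  assumes "S \<in> staircase n"
  shows staircase_in_boxes: "S i j \<noteq> Emp \<Longrightarrow> (i, j) \<in> boxes n"
    and staircase_Alpha_above: "S i j = Alpha \<Longrightarrow> 1 \<le> i' \<Longrightarrow> i' < i \<Longrightarrow> S i' j = Emp"
    and staircase_Beta_left: "S i j = Beta \<Longrightarrow> 1 \<le> j' \<Longrightarrow> j' < j \<Longrightarrow> S i j' = Emp"
    and staircase_diagonal: "1 \<le> i \<Longrightarrow> 1 \<le> j \<Longrightarrow> i + j = n + 1 \<Longrightarrow> S i j \<noteq> Emp"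
  using assms unfolding staircase_def by blast+

lemma staircase_outside:
  assumes "S \<in> staircase n" and "\<not> (1 \<le> i \<and> 1 \<le> j \<and> i + j \<le> n + 1)"
  shows "S i j = Emp"
  using staircase_in_boxes[OF assms(1), of i j] assms(2) by (auto simp: boxes_def)

lemma finite_staircase: "finite (staircase n)"
proof -
  let ?extend = "\<lambda>f i j. if (i, j) \<in> boxes n then f (i, j) else Emp"
  have "staircase n \<subseteq> ?extend ` (boxes n \<rightarrow>\<^sub>E (UNIV :: cell set))"
  proof
    fix S assume S: "S \<in> staircase n"
    let ?f = "restrict (\<lambda>(i, j). S i j) (boxes n)"
    have "S = ?extend ?f" using staircase_in_boxes[OF S] by (auto simp: fun_eq_iff)
    moreover have "?f \<in> boxes n \<rightarrow>\<^sub>E UNIV" by auto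
    ultimately show "S \<in> ?extend ` (boxes n \<rightarrow>\<^sub>E UNIV)" by blast
  qed
  moreover have "finite (boxes n \<rightarrow>\<^sub>E (UNIV :: cell set))"
    by (rule finite_PiE) (auto simp: finite_boxes UNIV_cell)
  ultimately show ?thesis by (meson finite_imageI finite_subset)
qed

lemma Z_pos:
  assumes "S \<in> staircase n" and "a > 0" and "b > 0"
  shows "Z n a b > 0"
proof -
  have "0 < wt n a b S" using assms by (simp add: wt_def)
  also have "\<dots> \<le> Z n a b"
    unfolding Z_def using assms
    by (intro member_le_sum finite_staircase) (auto simp: wt_def)
  finally show ?thesis .
qed

lemma subtab_staircase:
  assumes S: "S \<in> staircase (m + r + k)"
  shows "subtab S (r + 1) (k + 1) \<in> staircase m"
  unfolding staircase_def mem_Collect_eq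
proof (intro conjI allI impI)
  fix i j assume "subtab S (r + 1) (k + 1) i j \<noteq> Emp"
  then show "(i, j) \<in> boxes m"
    using staircase_in_boxes[OF S, of "i + r" "j + k"]
    by (auto simp: subtab_def boxes_def split: if_splits)
next
  fix i j i' assume "subtab S (r + 1) (k + 1) i j = Alpha" "1 \<le> i' \<and> i' < i"
  then show "subtab S (r + 1) (k + 1) i' j = Emp"
    using staircase_Alpha_above[OF S, of "i + r" "j + k" "i' + r"]
    by (auto simp: subtab_def split: if_splits)
next
  fix i j j' assume "subtab S (r + 1) (k + 1) i j = Beta" "1 \<le> j' \<and> j' < j"
  then show "subtab S (r + 1) (k + 1) i j' = Emp"
    using staircase_Beta_left[OF S, of "i + r" "j + k" "j' + k"]
    by (auto simp: subtab_def split: if_splits)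
next
  fix i j assume "1 \<le> i \<and> 1 \<le> j \<and> i + j = m + 1"
  then show "subtab S (r + 1) (k + 1) i j \<noteq> Emp"
    using staircase_diagonal[OF S, of "i + r" "j + k"] by (simp add: subtab_def)
qed

text \<open>The two columns forced by an \<open>\<alpha>\<close> in box \<open>(m+1,1)\<close>, glued in front of a tableau of size \<open>m\<close>.\<close>

definition add_alpha_corner :: "nat \<Rightarrow> filling \<Rightarrow> filling" where
  "add_alpha_corner m T = (\<lambda>i j.
     if j = 1 then (if i = m + 1 then Alpha else if i = m + 2 then Beta else Emp)
     else if j = 2 then (if i = m + 1 then Alpha else Emp)
     else if j = 0 then Emp else T i (j - 2))"

lemma add_alpha_corner_Alpha: "add_alpha_corner m T (m + 1) 1 = Alpha"
  by (simp add: add_alpha_corner_def)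

lemma subtab_add_alpha_corner:
  assumes "T \<in> staircase m"
  shows "subtab (add_alpha_corner m T) 1 3 = T"
  using staircase_outside[OF assms] by (auto simp: fun_eq_iff subtab_def add_alpha_corner_def)

lemma add_alpha_corner_staircase:
  assumes T: "T \<in> staircase m"
  shows "add_alpha_corner m T \<in> staircase (m + 2)"
  unfolding staircase_def mem_Collect_eq
proof (intro conjI allI impI)
  fix i j assume "add_alpha_corner m T i j \<noteq> Emp"
  then show "(i, j) \<in> boxes (m + 2)"
    using staircase_in_boxes[OF T, of i "j - 2"]
    by (auto simp: add_alpha_corner_def boxes_def split: if_splits)
next
  fix i j i' assume "add_alpha_corner m T i j = Alpha" "1 \<le> i' \<and> i' < i"
  then show "add_alpha_corner m T i' j = Emp"
    using staircase_Alpha_above[OF T, of i "j - 2" i']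
    by (auto simp: add_alpha_corner_def split: if_splits)
next
  fix i j j' assume Beta: "add_alpha_corner m T i j = Beta" and j': "1 \<le> j' \<and> j' < j"
  show "add_alpha_corner m T i j' = Emp"
  proof (cases "j \<ge> 3")
    case True
    with Beta have "T i (j - 2) = Beta" by (simp add: add_alpha_corner_def)
    moreover from this have "i + (j - 2) \<le> m + 1"
      using staircase_in_boxes[OF T, of i "j - 2"] by (simp add: boxes_def)
    ultimately show ?thesis
      using True j' staircase_Beta_left[OF T, of i "j - 2" "j' - 2"]
      by (auto simp: add_alpha_corner_def)
  next
    case False
    with Beta j' show ?thesis by (auto simp: add_alpha_corner_def split: if_splits)
  qed
next
  fix i j assume "1 \<le> i \<and> 1 \<le> j \<and> i + j = m + 2 + 1"
  then show "add_alpha_corner m T i j \<noteq> Emp"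
    using staircase_diagonal[OF T, of i "j - 2"]
    by (cases "j \<ge> 3") (auto simp: add_alpha_corner_def)
qed

lemma staircase_Alpha_corner_eq:
  assumes S: "S \<in> staircase (m + 2)" and A: "S (m + 1) 1 = Alpha"
  shows "add_alpha_corner m (subtab S 1 3) = S"
proof -
  have col1: "S i 1 = (if i = m + 1 then Alpha else if i = m + 2 then Beta else Emp)" for i
  proof -
    have "S (m + 2) 1 \<noteq> Emp" using staircase_diagonal[OF S, of "m + 2" 1] by simp
    moreover have "S (m + 2) 1 \<noteq> Alpha"
      using staircase_Alpha_above[OF S, of "m + 2" 1 "m + 1"] A by auto
    moreover have "i < m + 1 \<Longrightarrow> S i 1 = Emp"
      using staircase_Alpha_above[OF S A] staircase_outside[OF S, of i 1] by (cases "i = 0") auto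
    moreover have "i > m + 2 \<Longrightarrow> S i 1 = Emp" using staircase_outside[OF S] by simp
    moreover consider "i < m + 1" | "i = m + 1" | "i = m + 2" | "i > m + 2" by linarith
    ultimately show ?thesis using A by (cases "S (m + 2) 1") (metis cell.distinct)+
  qed
  have A2: "S (m + 1) 2 = Alpha"
  proof -
    have "S (m + 1) 2 \<noteq> Emp" using staircase_diagonal[OF S, of "m + 1" 2] by simp
    moreover have "S (m + 1) 2 \<noteq> Beta" using staircase_Beta_left[OF S, of "m + 1" 2 1] A by auto
    ultimately show ?thesis by (cases "S (m + 1) 2") auto
  qed
  have col2: "S i 2 = (if i = m + 1 then Alpha else Emp)" for i
  proof -
    consider "i = 0" | "1 \<le> i \<and> i < m + 1" | "i = m + 1" | "i > m + 1" by linarith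
    then show ?thesis
      using A2 staircase_Alpha_above[OF S A2, of i] staircase_outside[OF S, of i 2] by cases auto
  qed
  show ?thesis
    using col1 col2 staircase_outside[OF S]
    by (auto simp: fun_eq_iff add_alpha_corner_def subtab_def)
qed

lemma bij_betw_add_alpha_corner:
  "bij_betw (add_alpha_corner m) (staircase m) (staircase (m + 2) \<inter> alpha_at (m + 1) 1)"
proof (rule bij_betw_byWitness[where f' = "\<lambda>S. subtab S 1 3"])
  have subtab_13: "S \<in> staircase (m + 2) \<Longrightarrow> subtab S 1 3 \<in> staircase m" for S
    using subtab_staircase[of S m 0 2] by simp
  show "\<forall>T\<in>staircase m. subtab (add_alpha_corner m T) 1 3 = T"
    using subtab_add_alpha_corner by blast
  show "\<forall>S\<in>staircase (m + 2) \<inter> alpha_at (m + 1) 1. add_alpha_corner m (subtab S 1 3) = S"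
    using staircase_Alpha_corner_eq unfolding alpha_at_def by blast
  show "add_alpha_corner m ` staircase m \<subseteq> staircase (m + 2) \<inter> alpha_at (m + 1) 1"
    unfolding alpha_at_def using add_alpha_corner_staircase add_alpha_corner_Alpha by blast
  show "(\<lambda>S. subtab S 1 3) ` (staircase (m + 2) \<inter> alpha_at (m + 1) 1) \<subseteq> staircase m"
    using subtab_13 by auto
qed

lemma cells_add_alpha_corner:
  assumes T: "T \<in> staircase m" and "X \<noteq> Emp"
  shows "{(i, j) \<in> boxes (m + 2). add_alpha_corner m T i j = X}
       = {(i, j). j \<le> 2 \<and> add_alpha_corner m T i j = X}
         \<union> (\<lambda>(i, j). (i, j + 2)) ` {(i, j) \<in> boxes m. T i j = X}"
    (is "?L = ?corner \<union> ?shifted")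
proof
  show "?L \<subseteq> ?corner \<union> ?shifted"
  proof
    fix p assume "p \<in> ?L"
    then obtain i j where p: "p = (i, j)" "add_alpha_corner m T i j = X" by blast
    show "p \<in> ?corner \<union> ?shifted"
    proof (cases "j \<le> 2")
      case True
      with p show ?thesis by blast
    next
      case False
      with p have "T i (j - 2) = X" by (simp add: add_alpha_corner_def)
      then have "(i, j - 2) \<in> {(i, j) \<in> boxes m. T i j = X}"
        using staircase_in_boxes[OF T] \<open>X \<noteq> Emp\<close> by auto
      moreover have "p = (\<lambda>(i, j). (i, j + 2)) (i, j - 2)" using p False by simp
      ultimately show ?thesis by blast
    qed
  qed
  show "?corner \<union> ?shifted \<subseteq> ?L"
    using \<open>X \<noteq> Emp\<close> by (auto simp: add_alpha_corner_def boxes_def split: if_splits)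
qed

lemma card_cells_add_alpha_corner:
  assumes T: "T \<in> staircase m" and "X \<noteq> Emp"
  shows "card {(i, j) \<in> boxes (m + 2). add_alpha_corner m T i j = X}
       = card {(i, j). j \<le> 2 \<and> add_alpha_corner m T i j = X} + card {(i, j) \<in> boxes m. T i j = X}"
proof -
  have corner: "{(i, j). j \<le> 2 \<and> add_alpha_corner m T i j = X} \<subseteq> {m + 1, m + 2} \<times> {1, 2}"
    using \<open>X \<noteq> Emp\<close> by (auto simp: add_alpha_corner_def split: if_splits)
  have "inj_on (\<lambda>(i, j). (i, j + 2 :: nat)) A" for A :: "(nat \<times> nat) set"
    by (auto simp: inj_on_def)
  moreover have "finite {(i, j) \<in> boxes m. T i j = X}"
    by (rule finite_subset[OF _ finite_boxes]) auto
  moreover have "finite {(i, j). j \<le> 2 \<and> add_alpha_corner m T i j = X}"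
    using corner by (rule finite_subset) simp
  ultimately show ?thesis
    unfolding cells_add_alpha_corner[OF assms]
    by (subst card_Un_disjoint) (auto simp: card_image boxes_def)
qed

lemma wt_add_alpha_corner:
  assumes T: "T \<in> staircase m"
  shows "wt (m + 2) a b (add_alpha_corner m T) = a\<^sup>2 * b * wt m a b T"
proof -
  have "{(i, j). j \<le> 2 \<and> add_alpha_corner m T i j = Alpha} = {(m + 1, 1), (m + 1, 2)}"
    by (auto simp: add_alpha_corner_def split: if_splits)
  then have "N_alpha (m + 2) (add_alpha_corner m T) = N_alpha m T + 2"
    unfolding N_alpha_def using card_cells_add_alpha_corner[OF T, of Alpha] by simp
  moreover have "{(i, j). j \<le> 2 \<and> add_alpha_corner m T i j = Beta} = {(m + 2, 1)}"
    by (auto simp: add_alpha_corner_def split: if_splits)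
  then have "N_beta (m + 2) (add_alpha_corner m T) = N_beta m T + 1"
    unfolding N_beta_def using card_cells_add_alpha_corner[OF T, of Beta] by simp
  ultimately show ?thesis by (simp add: wt_def power_add power2_eq_square)
qed

lemma Prob_event_alpha_corner:
  "Prob_event (m + 2) a b (alpha_at (m + 1) 1) = a\<^sup>2 * b * Z m a b / Z (m + 2) a b"
proof -
  have "(\<Sum>S\<in>staircase (m + 2) \<inter> alpha_at (m + 1) 1. wt (m + 2) a b S)
      = (\<Sum>T\<in>staircase m. wt (m + 2) a b (add_alpha_corner m T))"
    by (rule sum.reindex_bij_betw[OF bij_betw_add_alpha_corner, symmetric])
  also have "\<dots> = a\<^sup>2 * b * Z m a b"
    unfolding Z_def sum_distrib_left by (rule sum.cong[OF refl wt_add_alpha_corner])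
  finally show ?thesis
    by (simp add: Prob_event_def Prob_def sum_divide_distrib[symmetric])
qed

theorem lemma3p1:
  fixes n :: nat and a b :: real and S :: filling
  assumes "n \<ge> 3" and "a > 0" and "b > 0"
    and "S \<in> staircase n" and "S (n - 1) 1 = Alpha"
  shows "Prob_cond n a b S (alpha_at (n - 1) 1) = Prob (n - 2) a b (subtab S 1 3)"
proof -
  define m where "m = n - 2"
  have n: "n = m + 2" using \<open>n \<ge> 3\<close> by (simp add: m_def)
  have S: "S \<in> staircase (m + 2)" and A: "S (m + 1) 1 = Alpha" using assms n by auto
  let ?T = "subtab S 1 3"
  have T: "?T \<in> staircase m" using subtab_staircase[of S m 0 2] S by simp
  have "wt (m + 2) a b S = a\<^sup>2 * b * wt m a b ?T"
    using wt_add_alpha_corner[OF T] staircase_Alpha_corner_eq[OF S A] by simp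
  moreover have "Z (m + 2) a b > 0" "Z m a b > 0"
    using Z_pos[OF S] Z_pos[OF T] assms(2,3) by auto
  ultimately have "Prob_cond (m + 2) a b S (alpha_at (m + 1) 1) = Prob m a b ?T"
    using A assms(2,3) unfolding Prob_cond_def Prob_event_alpha_corner Prob_def
    by (simp add: alpha_at_def field_simps)
  then show ?thesis using n by simp
qed

end
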